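(* Let $(A,+)$ be a finite abelian group with a fixed standard ppc-basis $e_1,\dots,e_r$, and let $\varepsilon_1,\varepsilon_2\in\mathrm{End}(A,+)$. Then $\varepsilon_1,\varepsilon_2$ are idempotent and commute with each other (under composition) if and only if there exist idempotent diagonal endomorphisms $\delta_1,\delta_2$ of $A$ and an automorphism $\alpha\in\mathrm{Aut}(A,+)$ with $\alpha^{-1}\varepsilon_1\alpha=\delta_1$ and $\alpha^{-1}\varepsilon_2\alpha=\delta_2$.
   Context: Every finite abelian group $A$ is a direct sum of cyclic groups of prime power order. A ppc-basis (prime power cyclic basis) of $A$ is a set $\{x_1,\dots,x_r\}$ of elements with $A=\langle x_1\rangle\oplus\cdots\oplus\langle x_r\rangle$ and each $\langle x_i\rangle$ cyclic of prime power order; the number $r$ (an isomorphism invariant) is the ppc-rank of $A$. Fix one such basis $e_1,\dots,e_r$, the standard ppc-basis. An endomorphism $\delta$ of $A$ is diagonal if for each $i$ there is $d_i\in\mathbb{Z}_{|e_i|}$ with $\delta(e_i)=d_ie_i$. An endomorphism $\varepsilon$ is idempotent if $\varepsilon\circ\varepsilon=\varepsilon$. Maps are composed as functions: $\alpha\beta=\alpha\circ\beta$. *)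

theory Defs
  imports "HOL-Computational_Algebra.Primes"
begin

text \<open>The finite abelian group A is the universe of a finite type of class ab_group_add.\<close>

definition nsmul :: "nat \<Rightarrow> 'a::ab_group_add \<Rightarrow> 'a" where
  "nsmul n x = (((+) x) ^^ n) 0"

definition add_ord :: "'a::ab_group_add \<Rightarrow> nat" where
  "add_ord x = (LEAST n. 0 < n \<and> nsmul n x = 0)"

definition additive_endo :: "('a::ab_group_add \<Rightarrow> 'a) \<Rightarrow> bool" where
  "additive_endo f \<longleftrightarrow> (\<forall>x y. f (x + y) = f x + f y)"

definition additive_auto :: "('a::ab_group_add \<Rightarrow> 'a) \<Rightarrow> bool" where
  "additive_auto f \<longleftrightarrow> additive_endo f \<and> bij f"

definition ppc_basis :: "nat \<Rightarrow> (nat \<Rightarrow> 'a::ab_group_add) \<Rightarrow> bool" where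
  "ppc_basis r e \<longleftrightarrow>
     (\<forall>i<r. \<exists>p k. prime p \<and> 1 \<le> k \<and> add_ord (e i) = p ^ k) \<and>
     (\<forall>x. \<exists>!c::nat \<Rightarrow> nat. (\<forall>i<r. c i < add_ord (e i)) \<and> (\<forall>i\<ge>r. c i = 0) \<and>
            x = (\<Sum>i<r. nsmul (c i) (e i)))"

definition diagonal_endo :: "nat \<Rightarrow> (nat \<Rightarrow> 'a::ab_group_add) \<Rightarrow> ('a \<Rightarrow> 'a) \<Rightarrow> bool" where
  "diagonal_endo r e \<delta> \<longleftrightarrow> additive_endo \<delta> \<and> (\<forall>i<r. \<exists>d::nat. \<delta> (e i) = nsmul d (e i))"

definition idempotent_map :: "('a \<Rightarrow> 'a) \<Rightarrow> bool" where
  "idempotent_map f \<longleftrightarrow> f \<circ> f = f"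

end

theory Submission
  imports Defs "HOL-Number_Theory.Cong"
begin

text \<open>An idempotent endomorphism \<pi> of a finite abelian group acts by 0 and 1 on a suitable
  ppc-basis. Take a basis element e_j of maximal order p^k: one of \<pi> e_j and e_j - \<pi> e_j
  still has order p^k, so, replacing \<pi> by 1 - \<pi> if necessary, some b = \<pi> e_j of order p^k
  is fixed by \<pi>. Written in the basis, b has a coefficient prime to p at some element e_l of
  order p^k, so b may replace e_l. Subtracting the \<langle>b\<rangle>-component of \<pi> from the identity
  projects onto a \<pi>-invariant complement of \<langle>b\<rangle>, isomorphic to the span of the other basis
  elements, and induction on the rank finishes.

  Commuting idempotents \<epsilon>1, \<epsilon>2 are handled by first choosing a basis adapted to \<epsilon>1; its
  two parts span the fixed points and the kernel of \<epsilon>1, both \<epsilon>2-invariant, and a basis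
  adapted to \<epsilon>2 is chosen in each. Since the new basis has the orders of the standard one,
  the automorphism mapping one onto the other conjugates \<epsilon>1, \<epsilon>2 to diagonal idempotents.
  Conversely diagonal endomorphisms commute, and conjugation preserves idempotency and
  commutation.\<close>

lemma nsmul_zero_left [simp]: "nsmul 0 x = 0"
  by (simp add: nsmul_def)

lemma nsmul_Suc [simp]: "nsmul (Suc n) x = x + nsmul n x"
  by (simp add: nsmul_def)

lemma nsmul_add_left: "nsmul (m + n) x = nsmul m x + nsmul n x"
  by (induction m) (simp_all add: add.assoc)

lemma nsmul_zero_right [simp]: "nsmul n (0::'a::ab_group_add) = 0"
  by (induction n) simp_all

lemma nsmul_add_right: "nsmul n (x + y) = nsmul n x + nsmul n (y::'a::ab_group_add)"
  by (induction n) (simp_all add: algebra_simps)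

lemma nsmul_mult: "nsmul (m * n) x = nsmul m (nsmul n x)"
  by (induction m) (simp_all add: nsmul_add_left)

lemma nsmul_minus_right: "nsmul n (- x) = - nsmul n (x::'a::ab_group_add)"
  by (induction n) (simp_all add: algebra_simps)

lemma nsmul_diff_right: "nsmul n (x - y) = nsmul n x - nsmul n (y::'a::ab_group_add)"
  using nsmul_add_right[of n x "- y"] by (simp add: nsmul_minus_right)

lemma nsmul_sum_right: "nsmul n (sum f A) = (\<Sum>i\<in>A. nsmul n (f i :: 'a::ab_group_add))"
  by (induction A rule: infinite_finite_induct) (simp_all add: nsmul_add_right)

lemma additive_endo_add: "additive_endo f \<Longrightarrow> f (x + y) = f x + f y"
  by (simp add: additive_endo_def)

lemma additive_endo_zero: "additive_endo f \<Longrightarrow> f 0 = 0"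
  using additive_endo_add[of f 0 0] by simp

lemma additive_endo_diff: "additive_endo f \<Longrightarrow> f (x - y) = f x - f y"
  using additive_endo_add[of f "x - y" y] by (simp add: eq_diff_eq)

lemma additive_endo_nsmul: "additive_endo f \<Longrightarrow> f (nsmul n x) = nsmul n (f x)"
  by (induction n) (simp_all add: additive_endo_zero additive_endo_add)

lemma additive_endo_sum: "additive_endo f \<Longrightarrow> f (sum g A) = (\<Sum>i\<in>A. f (g i))"
  by (induction A rule: infinite_finite_induct) (simp_all add: additive_endo_zero additive_endo_add)

lemma additive_endo_comp: "additive_endo f \<Longrightarrow> additive_endo g \<Longrightarrow> additive_endo (f \<circ> g)"
  by (simp add: additive_endo_def)

lemma additive_endo_inv:
  assumes "additive_auto \<alpha>"
  shows "additive_endo (inv \<alpha>)"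
  unfolding additive_endo_def
proof (intro allI)
  fix x y
  have add: "additive_endo \<alpha>" and bij: "bij \<alpha>" using assms by (simp_all add: additive_auto_def)
  have "\<alpha> (inv \<alpha> x + inv \<alpha> y) = x + y"
    using bij by (simp add: additive_endo_add[OF add] bij_is_surj surj_f_inv_f)
  then have "inv \<alpha> (x + y) = inv \<alpha> (\<alpha> (inv \<alpha> x + inv \<alpha> y))" by simp
  also have "\<dots> = inv \<alpha> x + inv \<alpha> y" using bij by (simp add: bij_is_inj)
  finally show "inv \<alpha> (x + y) = inv \<alpha> x + inv \<alpha> y" .
qed

lemma ex_nsmul_eq_0: "\<exists>n>0. nsmul n (x::'a::{finite,ab_group_add}) = 0"
proof -
  have "\<not> inj (\<lambda>n. nsmul n x)"
    using finite_imageD[of "\<lambda>n. nsmul n x" UNIV] by auto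
  then obtain i j where ij: "nsmul i x = nsmul j x" "i \<noteq> j"
    unfolding inj_def by blast
  then have "\<exists>i j. nsmul i x = nsmul j x \<and> i < j"
    by (cases i j rule: linorder_cases) (auto intro: sym)
  then obtain i j where "nsmul i x = nsmul j x" "i < j" by blast
  moreover have "nsmul j x = nsmul i x + nsmul (j - i) x"
    using \<open>i < j\<close> by (simp add: nsmul_add_left[symmetric])
  ultimately show ?thesis by (intro exI[of _ "j - i"]) simp
qed

lemma add_ord_pos: "0 < add_ord (x::'a::{finite,ab_group_add})"
  and nsmul_add_ord: "nsmul (add_ord x) x = 0"
  unfolding add_ord_def using LeastI_ex[OF ex_nsmul_eq_0[of x]] by auto

lemma nsmul_mod_add_ord: "nsmul (n mod add_ord x) x = nsmul n (x::'a::{finite,ab_group_add})"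
proof -
  have "nsmul n x = nsmul (n div add_ord x * add_ord x) x + nsmul (n mod add_ord x) x"
    by (simp only: nsmul_add_left[symmetric] div_mult_mod_eq)
  then show ?thesis by (simp add: nsmul_mult nsmul_add_ord)
qed

lemma nsmul_eq_0_iff: "nsmul n (x::'a::{finite,ab_group_add}) = 0 \<longleftrightarrow> add_ord x dvd n"
proof
  assume "nsmul n x = 0"
  then have "nsmul (n mod add_ord x) x = 0" by (simp add: nsmul_mod_add_ord)
  moreover have "\<not> (0 < n mod add_ord x \<and> nsmul (n mod add_ord x) x = 0)"
    using add_ord_pos[of x] unfolding add_ord_def by (intro not_less_Least) simp
  ultimately show "add_ord x dvd n" by (simp add: dvd_eq_mod_eq_0)
next
  assume "add_ord x dvd n"
  then obtain k where "n = k * add_ord x" by (metis dvd_def mult.commute)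
  then show "nsmul n x = 0" by (simp add: nsmul_mult nsmul_add_ord)
qed

lemma nsmul_eq_nsmul_iff:
  "nsmul m x = nsmul n x \<longleftrightarrow> [m = n] (mod add_ord (x::'a::{finite,ab_group_add}))"
proof (cases "m \<le> n")
  case True
  then have "nsmul n x = nsmul m x + nsmul (n - m) x" by (simp add: nsmul_add_left[symmetric])
  then show ?thesis
    using True by (simp add: nsmul_eq_0_iff cong_altdef_nat cong_sym_eq[of m n])
next
  case False
  then have "nsmul m x = nsmul n x + nsmul (m - n) x" by (simp add: nsmul_add_left[symmetric])
  then show ?thesis
    using False by (simp add: nsmul_eq_0_iff cong_altdef_nat)
qed

lemma add_ord_eqI:
  fixes x y :: "'a::{finite,ab_group_add}"
  shows "(\<And>n. nsmul n x = 0 \<longleftrightarrow> nsmul n y = 0) \<Longrightarrow> add_ord x = add_ord y"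
proof -
  assume ord: "\<And>n. nsmul n x = 0 \<longleftrightarrow> nsmul n y = 0"
  have "add_ord x dvd add_ord y" "add_ord y dvd add_ord x"
    using ord[of "add_ord x"] ord[of "add_ord y"] nsmul_add_ord[of x] nsmul_add_ord[of y]
      nsmul_eq_0_iff[of "add_ord y" x] nsmul_eq_0_iff[of "add_ord x" y] by blast+
  then show ?thesis by (rule dvd_antisym)
qed

lemma minus_eq_nsmul: "- x = nsmul (add_ord x - 1) (x::'a::{finite,ab_group_add})"
proof -
  have "x + nsmul (add_ord x - 1) x = 0"
    using nsmul_add_ord[of x] add_ord_pos[of x] by (metis Suc_diff_1 nsmul_Suc)
  then show ?thesis by (simp add: neg_eq_iff_add_eq_0)
qed

lemma add_ord_zero_dvd: "add_ord (0::'a::{finite,ab_group_add}) dvd n"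
  using nsmul_eq_0_iff[of n "0::'a"] by simp

section \<open>Linear combinations of a family\<close>

definition lincomb :: "nat set \<Rightarrow> (nat \<Rightarrow> 'a::ab_group_add) \<Rightarrow> (nat \<Rightarrow> nat) \<Rightarrow> 'a" where
  "lincomb I f c = (\<Sum>i\<in>I. nsmul (c i) (f i))"

definition indep :: "nat set \<Rightarrow> (nat \<Rightarrow> 'a::ab_group_add) \<Rightarrow> bool" where
  "indep I f \<longleftrightarrow> (\<forall>c. lincomb I f c = 0 \<longrightarrow> (\<forall>i\<in>I. nsmul (c i) (f i) = 0))"

definition span :: "nat set \<Rightarrow> (nat \<Rightarrow> 'a::ab_group_add) \<Rightarrow> 'a set" where
  "span I f = range (lincomb I f)"

lemma indepD: "indep I f \<Longrightarrow> lincomb I f c = 0 \<Longrightarrow> i \<in> I \<Longrightarrow> nsmul (c i) (f i) = 0"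
  unfolding indep_def by blast

lemma lincomb_cong:
  "(\<And>i. i \<in> I \<Longrightarrow> nsmul (c i) (f i) = nsmul (d i) (g i)) \<Longrightarrow> lincomb I f c = lincomb I g d"
  unfolding lincomb_def by (rule sum.cong) auto

lemma lincomb_add: "lincomb I f (\<lambda>i. c i + d i) = lincomb I f c + lincomb I f d"
  by (simp add: lincomb_def nsmul_add_left sum.distrib)

lemma lincomb_nsmul: "nsmul n (lincomb I f c) = lincomb I f (\<lambda>i. n * c i)"
  by (simp add: lincomb_def nsmul_sum_right nsmul_mult)

lemma lincomb_eq_0: "(\<And>i. i \<in> I \<Longrightarrow> nsmul (c i) (f i) = 0) \<Longrightarrow> lincomb I f c = 0"
  unfolding lincomb_def by (rule sum.neutral) auto

lemma lincomb_remove: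
  "finite I \<Longrightarrow> l \<in> I \<Longrightarrow> lincomb I f c = nsmul (c l) (f l) + lincomb (I - {l}) f c"
  unfolding lincomb_def by (rule sum.remove)

lemma lincomb_Diff_singleton:
  assumes "finite I" and "l \<in> I"
  shows "lincomb (I - {l}) f c = lincomb I f (c(l := 0))"
proof -
  have "lincomb (I - {l}) f c = lincomb (I - {l}) f (c(l := 0))" by (rule lincomb_cong) simp
  then show ?thesis using lincomb_remove[OF assms, of f "c(l := 0)"] by simp
qed

lemma lincomb_delta:
  assumes "finite I" and "l \<in> I"
  shows "lincomb I f (\<lambda>i. if i = l then n else 0) = nsmul n (f l)"
proof -
  have "lincomb (I - {l}) f (\<lambda>i. if i = l then n else 0) = 0" by (rule lincomb_eq_0) simp
  then show ?thesis using lincomb_remove[OF assms, of f] by simp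
qed

lemma lincomb_union:
  assumes "finite I1" and "finite I2" and "I1 \<inter> I2 = {}"
  shows "lincomb (I1 \<union> I2) (\<lambda>i. if i \<in> I1 then g1 i else g2 i) c = lincomb I1 g1 c + lincomb I2 g2 c"
    (is "lincomb _ ?g c = _")
proof -
  have "lincomb (I1 \<union> I2) ?g c = lincomb I1 ?g c + lincomb I2 ?g c"
    using assms unfolding lincomb_def by (rule sum.union_disjoint)
  moreover have "lincomb I1 ?g c = lincomb I1 g1 c" by (rule lincomb_cong) simp
  moreover have "lincomb I2 ?g c = lincomb I2 g2 c" using assms(3) by (intro lincomb_cong) auto
  ultimately show ?thesis by simp
qed

lemma additive_endo_lincomb: "additive_endo h \<Longrightarrow> h (lincomb I f c) = lincomb I (\<lambda>i. h (f i)) c"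
  by (simp add: lincomb_def additive_endo_sum additive_endo_nsmul)

lemma lincomb_eq_iff:
  fixes f :: "nat \<Rightarrow> 'a::{finite,ab_group_add}"
  assumes "indep I f"
  shows "lincomb I f c = lincomb I f d \<longleftrightarrow> (\<forall>i\<in>I. nsmul (c i) (f i) = nsmul (d i) (f i))"
proof
  assume eq: "lincomb I f c = lincomb I f d"
  \<comment> \<open>coefficients are natural numbers, so the coefficient -1 at i is add_ord (f i) - 1\<close>
  define d' where "d' i = d i * (add_ord (f i) - 1)" for i
  have minus_d: "nsmul (d' i) (f i) = - nsmul (d i) (f i)" for i
    by (simp only: d'_def nsmul_mult minus_eq_nsmul[symmetric] nsmul_minus_right)
  have "lincomb I f d' = - lincomb I f d"
    unfolding lincomb_def minus_d by (rule sum_negf)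
  then have "lincomb I f (\<lambda>i. c i + d' i) = 0" using eq by (simp add: lincomb_add)
  then have "nsmul (c i + d' i) (f i) = 0" if "i \<in> I" for i
    using assms that unfolding indep_def by blast
  then show "\<forall>i\<in>I. nsmul (c i) (f i) = nsmul (d i) (f i)"
    by (simp add: nsmul_add_left minus_d)
next
  assume "\<forall>i\<in>I. nsmul (c i) (f i) = nsmul (d i) (f i)"
  then show "lincomb I f c = lincomb I f d" by (intro lincomb_cong) blast
qed

lemma indep_subset:
  assumes "finite J" and "indep J f" and "I \<subseteq> J"
  shows "indep I f"
  unfolding indep_def
proof (intro allI impI ballI)
  fix c i assume "lincomb I f c = 0" and i: "i \<in> I"
  moreover have "lincomb I f c = lincomb J f (\<lambda>i. if i \<in> I then c i else 0)"
    unfolding lincomb_def using assms(1,3) by (intro sum.mono_neutral_cong_left) auto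
  ultimately have "lincomb J f (\<lambda>i. if i \<in> I then c i else 0) = 0" by simp
  from indepD[OF assms(2) this, of i] show "nsmul (c i) (f i) = 0" using i assms(3) by auto
qed

lemma indep_singleton: "indep {l} f"
  by (simp add: indep_def lincomb_def)

lemma lincomb_in_span [simp]: "lincomb I f c \<in> span I f"
  by (simp add: span_def)

lemma span_zero: "0 \<in> span I f"
  using lincomb_in_span[of I f "\<lambda>_. 0"] by (simp add: lincomb_eq_0)

lemma span_add: "x \<in> span I f \<Longrightarrow> y \<in> span I f \<Longrightarrow> x + y \<in> span I f"
  unfolding span_def by (auto simp: lincomb_add[symmetric])

lemma span_nsmul: "x \<in> span I f \<Longrightarrow> nsmul n x \<in> span I f"
  unfolding span_def by (auto simp: lincomb_nsmul)

lemma span_minus: "x \<in> span I f \<Longrightarrow> - (x::'a::{finite,ab_group_add}) \<in> span I f"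
  by (subst minus_eq_nsmul) (rule span_nsmul)

lemma span_diff: "x \<in> span I f \<Longrightarrow> y \<in> span I f \<Longrightarrow> x - (y::'a::{finite,ab_group_add}) \<in> span I f"
  unfolding diff_conv_add_uminus by (intro span_add span_minus)

lemma span_sum: "(\<And>i. i \<in> A \<Longrightarrow> g i \<in> span I f) \<Longrightarrow> sum g A \<in> span I f"
  by (induction A rule: infinite_finite_induct) (simp_all add: span_zero span_add)

lemma span_gen: "finite I \<Longrightarrow> i \<in> I \<Longrightarrow> f i \<in> span I f"
  using lincomb_in_span[of I f "\<lambda>j. if j = i then 1 else 0"] by (simp add: lincomb_delta)

lemma span_subset_span: "(\<And>i. i \<in> I \<Longrightarrow> f i \<in> span J g) \<Longrightarrow> span I f \<subseteq> span J g"
  unfolding span_def[of I] lincomb_def by (auto intro!: span_sum span_nsmul)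

lemma span_singleton: "span {l} (\<lambda>_. b) = range (\<lambda>m. nsmul m b)"
proof (intro equalityI subsetI)
  fix x assume "x \<in> span {l} (\<lambda>_. b)"
  then obtain c where "x = lincomb {l} (\<lambda>_. b) c" by (auto simp: span_def)
  then show "x \<in> range (\<lambda>m. nsmul m b)" by (simp add: lincomb_def)
next
  fix x assume "x \<in> range (\<lambda>m. nsmul m b)"
  then obtain m where "x = nsmul m b" by blast
  then have "x = lincomb {l} (\<lambda>_. b) (\<lambda>_. m)" by (simp add: lincomb_def)
  then show "x \<in> span {l} (\<lambda>_. b)" by simp
qed

lemma span_union:
  assumes "finite I1" and "finite I2" and "I1 \<inter> I2 = {}"
  shows "span (I1 \<union> I2) (\<lambda>i. if i \<in> I1 then g1 i else g2 i) =
    {x + y | x y. x \<in> span I1 g1 \<and> y \<in> span I2 g2}"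
proof (intro equalityI subsetI)
  fix z assume "z \<in> span (I1 \<union> I2) (\<lambda>i. if i \<in> I1 then g1 i else g2 i)"
  then show "z \<in> {x + y | x y. x \<in> span I1 g1 \<and> y \<in> span I2 g2}"
    unfolding span_def using lincomb_union[OF assms] by blast
next
  fix z assume "z \<in> {x + y | x y. x \<in> span I1 g1 \<and> y \<in> span I2 g2}"
  then obtain c d where z: "z = lincomb I1 g1 c + lincomb I2 g2 d" unfolding span_def by blast
  define k where "k i = (if i \<in> I1 then c i else d i)" for i
  have "lincomb I1 g1 k = lincomb I1 g1 c" by (rule lincomb_cong) (simp add: k_def)
  moreover have "lincomb I2 g2 k = lincomb I2 g2 d" using assms(3) by (intro lincomb_cong) (auto simp: k_def)
  ultimately have "z = lincomb (I1 \<union> I2) (\<lambda>i. if i \<in> I1 then g1 i else g2 i) k"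
    using z by (simp add: lincomb_union[OF assms])
  then show "z \<in> span (I1 \<union> I2) (\<lambda>i. if i \<in> I1 then g1 i else g2 i)" by simp
qed

lemma indep_union:
  assumes "finite I1" and "finite I2" and "I1 \<inter> I2 = {}" and "indep I1 g1" and "indep I2 g2"
    and direct: "\<And>x y. x \<in> span I1 g1 \<Longrightarrow> y \<in> span I2 g2 \<Longrightarrow> x + y = 0 \<Longrightarrow> x = 0"
  shows "indep (I1 \<union> I2) (\<lambda>i. if i \<in> I1 then g1 i else g2 i)"
  unfolding indep_def
proof (intro allI impI ballI)
  fix c i assume "lincomb (I1 \<union> I2) (\<lambda>i. if i \<in> I1 then g1 i else g2 i) c = 0" and i: "i \<in> I1 \<union> I2"
  then have sum: "lincomb I1 g1 c + lincomb I2 g2 c = 0" by (simp add: lincomb_union[OF assms(1-3)])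
  then have "lincomb I1 g1 c = 0" using direct[of "lincomb I1 g1 c" "lincomb I2 g2 c"] by simp
  moreover from this have "lincomb I2 g2 c = 0" using sum by simp
  ultimately have "\<forall>i\<in>I1. nsmul (c i) (g1 i) = 0" and "\<forall>i\<in>I2. nsmul (c i) (g2 i) = 0"
    using assms(4,5) unfolding indep_def by blast+
  then show "nsmul (c i) (if i \<in> I1 then g1 i else g2 i) = 0" using i by auto
qed

definition additive_on :: "'a::ab_group_add set \<Rightarrow> ('a \<Rightarrow> 'a) \<Rightarrow> bool" where
  "additive_on S h \<longleftrightarrow> (\<forall>x\<in>S. \<forall>y\<in>S. h (x + y) = h x + h y)"

lemma additive_on_UNIV: "additive_on UNIV h \<longleftrightarrow> additive_endo h"
  by (simp add: additive_on_def additive_endo_def)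

lemma additive_on_subset: "additive_on S h \<Longrightarrow> T \<subseteq> S \<Longrightarrow> additive_on T h"
  by (auto simp: additive_on_def)

lemma additive_on_span_zero: "additive_on (span I f) h \<Longrightarrow> h 0 = 0"
  using span_zero[of I f] unfolding additive_on_def by (metis add_0 add_right_imp_eq)

lemma additive_on_span_sum:
  assumes "additive_on (span I f) h" and "\<And>i. i \<in> A \<Longrightarrow> g i \<in> span I f"
  shows "h (sum g A) = (\<Sum>i\<in>A. h (g i))"
  using assms(2)
proof (induction A rule: infinite_finite_induct)
  case (insert a A)
  then have "h (g a + sum g A) = h (g a) + h (sum g A)"
    using assms(1) span_sum[of A g] unfolding additive_on_def by blast
  then show ?case using insert by simp
qed (simp_all add: additive_on_span_zero[OF assms(1)])

lemma additive_on_span_nsmul: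
  assumes "additive_on (span I f) h" and "x \<in> span I f"
  shows "h (nsmul n x) = nsmul n (h x)"
proof (induction n)
  case (Suc n)
  have "h (x + nsmul n x) = h x + h (nsmul n x)"
    using assms span_nsmul[OF assms(2)] unfolding additive_on_def by blast
  then show ?case using Suc by simp
qed (simp add: additive_on_span_zero[OF assms(1)])

lemma additive_on_span_lincomb:
  assumes "additive_on (span I f) h" and "\<And>i. i \<in> J \<Longrightarrow> g i \<in> span I f"
  shows "h (lincomb J g c) = lincomb J (\<lambda>i. h (g i)) c"
  unfolding lincomb_def using assms
  by (simp add: additive_on_span_sum additive_on_span_nsmul span_nsmul)

lemma lincomb_eq_transfer:
  fixes e g :: "nat \<Rightarrow> 'a::{finite,ab_group_add}"
  assumes "indep I e" and ord: "\<And>i. i \<in> I \<Longrightarrow> add_ord (g i) dvd add_ord (e i)"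
    and "lincomb I e c = lincomb I e d"
  shows "lincomb I g c = lincomb I g d"
proof (rule lincomb_cong)
  fix i assume "i \<in> I"
  then have "[c i = d i] (mod add_ord (e i))"
    using assms(1,3) by (simp add: lincomb_eq_iff nsmul_eq_nsmul_iff)
  then show "nsmul (c i) (g i) = nsmul (d i) (g i)"
    using cong_dvd_modulus_nat[OF _ ord[OF \<open>i \<in> I\<close>]] by (simp add: nsmul_eq_nsmul_iff)
qed

lemma ex_additive_on_span:
  fixes e g :: "nat \<Rightarrow> 'a::{finite,ab_group_add}"
  assumes ind: "indep I e" and ord: "\<And>i. i \<in> I \<Longrightarrow> add_ord (g i) dvd add_ord (e i)"
  shows "\<exists>h. additive_on (span I e) h \<and> (\<forall>c. h (lincomb I e c) = lincomb I g c)"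
proof -
  define h where "h x = lincomb I g (SOME c. x = lincomb I e c)" for x
  have h_lincomb: "h (lincomb I e c) = lincomb I g c" for c
  proof -
    have "lincomb I e c = lincomb I e (SOME d. lincomb I e c = lincomb I e d)"
      by (rule someI[of "\<lambda>d. lincomb I e c = lincomb I e d" c]) (rule refl)
    from lincomb_eq_transfer[OF ind ord this] show ?thesis unfolding h_def by simp
  qed
  have "additive_on (span I e) h"
    unfolding additive_on_def span_def
  proof (intro ballI)
    fix x y assume "x \<in> range (lincomb I e)" and "y \<in> range (lincomb I e)"
    then obtain c d where "x = lincomb I e c" and "y = lincomb I e d" by blast
    then show "h (x + y) = h x + h y" by (simp add: lincomb_add[symmetric] h_lincomb)
  qed
  then show ?thesis using h_lincomb by blast
qed

lemma indep_image:
  fixes e :: "nat \<Rightarrow> 'a::{finite,ab_group_add}"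
  assumes fin: "finite I" and ind: "indep I e" and h: "additive_on (span I e) h"
    and inj: "\<And>x. x \<in> span I e \<Longrightarrow> h x = 0 \<Longrightarrow> x = 0"
  shows "indep I (\<lambda>i. h (e i))"
    and "\<And>i. i \<in> I \<Longrightarrow> add_ord (h (e i)) = add_ord (e i)"
    and "span I (\<lambda>i. h (e i)) = h ` span I e"
proof -
  have h_lincomb: "h (lincomb I e c) = lincomb I (\<lambda>i. h (e i)) c" for c
    using additive_on_span_lincomb[OF h] span_gen[OF fin] by blast
  have h_nsmul: "h (nsmul n (e i)) = nsmul n (h (e i))" if "i \<in> I" for i n
    using additive_on_span_nsmul[OF h span_gen[OF fin that]] .
  have h_zero: "h x = 0 \<longleftrightarrow> x = 0" if "x \<in> span I e" for x
    using inj[OF that] additive_on_span_zero[OF h] by blast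
  show "indep I (\<lambda>i. h (e i))"
    unfolding indep_def
  proof (intro allI impI ballI)
    fix c i assume "lincomb I (\<lambda>i. h (e i)) c = 0" and i: "i \<in> I"
    then have "lincomb I e c = 0" using h_lincomb[of c] h_zero[of "lincomb I e c"] by simp
    then have "nsmul (c i) (e i) = 0" using ind i unfolding indep_def by blast
    then show "nsmul (c i) (h (e i)) = 0"
      using h_nsmul[OF i] additive_on_span_zero[OF h] by metis
  qed
  show "add_ord (h (e i)) = add_ord (e i)" if "i \<in> I" for i
    using h_zero[OF span_nsmul[OF span_gen[OF fin that]]] by (intro add_ord_eqI) (simp add: h_nsmul[OF that])
  have "lincomb I (\<lambda>i. h (e i)) = h \<circ> lincomb I e" by (simp add: fun_eq_iff h_lincomb)
  then show "span I (\<lambda>i. h (e i)) = h ` span I e" unfolding span_def by (simp add: image_comp)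
qed

lemma ex_additive_auto_basis:
  fixes e g :: "nat \<Rightarrow> 'a::{finite,ab_group_add}"
  assumes fin: "finite I" and inde: "indep I e" and spe: "span I e = UNIV"
    and indg: "indep I g" and ord: "\<And>i. i \<in> I \<Longrightarrow> add_ord (g i) = add_ord (e i)"
  obtains \<alpha> where "additive_auto \<alpha>" and "\<forall>i\<in>I. \<alpha> (e i) = g i"
proof -
  obtain \<alpha> where "additive_on (span I e) \<alpha>" and \<alpha>: "\<And>c. \<alpha> (lincomb I e c) = lincomb I g c"
    using ex_additive_on_span[OF inde, of g] ord by auto
  then have "additive_endo \<alpha>" using spe by (simp add: additive_on_UNIV)
  moreover have "inj \<alpha>"
  proof (rule injI)
    fix x y assume "\<alpha> x = \<alpha> y"
    have "x \<in> span I e" and "y \<in> span I e" using spe by simp_all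
    then obtain c d where "x = lincomb I e c" and "y = lincomb I e d"
      unfolding span_def by blast
    then show "x = y" using \<open>\<alpha> x = \<alpha> y\<close> \<alpha> lincomb_eq_transfer[OF indg, of e c d] ord by simp
  qed
  then have "bij \<alpha>" by (simp add: bij_def finite_UNIV_inj_surj)
  moreover have "\<alpha> (e i) = g i" if "i \<in> I" for i
    using \<alpha>[of "\<lambda>j. if j = i then 1 else 0"] by (simp add: lincomb_delta[OF fin that])
  ultimately show thesis using that by (simp add: additive_auto_def)
qed

section \<open>Exchanging a basis element\<close>

definition prime_power_order :: "'a::ab_group_add \<Rightarrow> bool" where
  "prime_power_order x \<longleftrightarrow> (\<exists>p k. prime p \<and> 1 \<le> k \<and> add_ord x = p ^ k)"

lemma prime_power_not_dvd_pred:
  fixes p :: nat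
  assumes "prime p" and "1 \<le> k"
  shows "\<not> p ^ k dvd p ^ (k - 1)"
  using assms power_dvd_imp_le[of p k "k - 1"] prime_gt_1_nat[of p] by auto

lemma add_ord_split:
  fixes x :: "'a::{finite,ab_group_add}"
  assumes \<pi>: "additive_endo \<pi>" and p: "prime p" and k: "1 \<le> k" and x: "add_ord x = p ^ k"
  shows "add_ord (\<pi> x) = p ^ k \<or> add_ord (x - \<pi> x) = p ^ k"
proof (rule ccontr)
  assume neq: "\<not> ?thesis"
  have below: "nsmul (p ^ (k - 1)) y = 0" if "nsmul (p ^ k) y = 0" and "add_ord y \<noteq> p ^ k" for y :: 'a
  proof -
    have "add_ord y dvd p ^ k" using that(1) by (simp add: nsmul_eq_0_iff)
    then obtain i where "i \<le> k" and i: "add_ord y = p ^ i" using divides_primepow_nat[OF p] by blast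
    moreover have "i \<noteq> k" using that(2) i by auto
    ultimately have "add_ord y dvd p ^ (k - 1)" by (simp add: le_imp_power_dvd)
    then show ?thesis by (simp add: nsmul_eq_0_iff)
  qed
  have "nsmul (p ^ k) x = 0" using x by (simp add: nsmul_eq_0_iff)
  then have "nsmul (p ^ k) (\<pi> x) = 0" and "nsmul (p ^ k) (x - \<pi> x) = 0"
    by (simp_all add: additive_endo_nsmul[OF \<pi>, symmetric] additive_endo_zero[OF \<pi>] nsmul_diff_right)
  then have "nsmul (p ^ (k - 1)) (\<pi> x) = 0" and "nsmul (p ^ (k - 1)) (x - \<pi> x) = 0"
    using below neq by blast+
  then have "nsmul (p ^ (k - 1)) x = 0" by (simp add: nsmul_diff_right)
  then show False using x prime_power_not_dvd_pred[OF p k] by (simp add: nsmul_eq_0_iff)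
qed

lemma ex_unit_coordinate:
  fixes e :: "nat \<Rightarrow> 'a::{finite,ab_group_add}"
  assumes ind: "indep I e" and pp: "\<forall>i\<in>I. prime_power_order (e i)"
    and max: "\<forall>i\<in>I. add_ord (e i) \<le> p ^ k" and p: "prime p" and k: "1 \<le> k"
    and ord_b: "add_ord (lincomb I e m) = p ^ k"
  shows "\<exists>l\<in>I. add_ord (e l) = p ^ k \<and> coprime (m l) (p ^ k)"
proof -
  have p1: "1 < p" using p by (rule prime_gt_1_nat)
  have "nsmul (p ^ (k - 1)) (lincomb I e m) \<noteq> 0"
    using ord_b prime_power_not_dvd_pred[OF p k] by (simp add: nsmul_eq_0_iff)
  then obtain l where l: "l \<in> I" and not_dvd: "\<not> add_ord (e l) dvd p ^ (k - 1) * m l"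
    using lincomb_eq_0[of I "\<lambda>i. p ^ (k - 1) * m i" e] by (auto simp: lincomb_nsmul nsmul_eq_0_iff)
  have "lincomb I e (\<lambda>i. p ^ k * m i) = 0"
    using ord_b by (simp add: lincomb_nsmul[symmetric] nsmul_eq_0_iff)
  then have "nsmul (p ^ k * m l) (e l) = 0" using ind l unfolding indep_def by blast
  then have dvd: "add_ord (e l) dvd p ^ k * m l" by (simp add: nsmul_eq_0_iff)
  obtain q s where q: "prime q" and ord_l: "add_ord (e l) = q ^ s"
    using pp l unfolding prime_power_order_def by blast
  have "q = p"
  proof (rule ccontr)
    assume "q \<noteq> p"
    then have "coprime (q ^ s) (p ^ k)" using p q by (simp add: primes_coprime)
    then have "q ^ s dvd m l" using dvd ord_l by (simp add: coprime_dvd_mult_right_iff)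
    then show False using not_dvd ord_l by simp
  qed
  have "s \<le> k" using max l ord_l \<open>q = p\<close> power_le_imp_le_exp[OF p1] by auto
  moreover have "\<not> s \<le> k - 1"
    using not_dvd ord_l \<open>q = p\<close> by (auto simp: le_imp_power_dvd)
  ultimately have "s = k" by simp
  have "\<not> p dvd m l"
  proof
    assume "p dvd m l"
    then obtain t where "m l = p * t" by (rule dvdE)
    moreover have "p ^ (k - 1) * p = p ^ k" using k by (simp add: power_eq_if)
    ultimately have "p ^ (k - 1) * m l = p ^ k * t" by (simp add: mult.assoc)
    then show False using not_dvd ord_l \<open>q = p\<close> \<open>s = k\<close> by simp
  qed
  then have "coprime (m l) (p ^ k)" using p by (simp add: prime_imp_coprime coprime_commute)
  then show ?thesis using l ord_l \<open>q = p\<close> \<open>s = k\<close> by blast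
qed

lemma lincomb_fun_upd:
  assumes "finite I" and "l \<in> I"
  shows "lincomb I (f(l := b)) c = nsmul (c l) b + lincomb I f (c(l := 0))"
proof -
  have "lincomb (I - {l}) (f(l := b)) c = lincomb (I - {l}) f c" by (rule lincomb_cong) simp
  then show ?thesis using lincomb_remove[OF assms, of "f(l := b)" c] lincomb_Diff_singleton[OF assms] by simp
qed

lemma exchange_indep:
  fixes e :: "nat \<Rightarrow> 'a::{finite,ab_group_add}"
  assumes fin: "finite I" and ind: "indep I e" and l: "l \<in> I"
    and ord_b: "add_ord (lincomb I e m) dvd add_ord (e l)" and unit: "coprime (m l) (add_ord (e l))"
  shows "indep I (e(l := lincomb I e m))"
  unfolding indep_def
proof (intro allI impI ballI)
  define b where "b = lincomb I e m"
  fix c i assume c: "lincomb I (e(l := lincomb I e m)) c = 0" and i: "i \<in> I"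
  have "lincomb I e (\<lambda>i. c l * m i + (c(l := 0)) i) = nsmul (c l) b + lincomb I e (c(l := 0))"
    unfolding lincomb_add b_def lincomb_nsmul ..
  then have "lincomb I e (\<lambda>i. c l * m i + (c(l := 0)) i) = 0"
    using c by (simp only: lincomb_fun_upd[OF fin l] b_def)
  then have "nsmul (c l * m l) (e l) = 0" using indepD[OF ind _ l] by fastforce
  then have "add_ord (e l) dvd c l"
    using unit by (simp add: nsmul_eq_0_iff coprime_dvd_mult_left_iff coprime_commute)
  then have b0: "nsmul (c l) b = 0" using ord_b by (simp add: b_def nsmul_eq_0_iff dvd_trans)
  then have "lincomb I e (c(l := 0)) = 0" using c by (simp add: lincomb_fun_upd[OF fin l] b_def)
  then have "nsmul ((c(l := 0)) i) (e i) = 0" using indepD[OF ind _ i] by blast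
  then show "nsmul (c i) ((e(l := lincomb I e m)) i) = 0" using b0 by (cases "i = l") (auto simp: b_def)
qed

lemma exchange_span:
  fixes e :: "nat \<Rightarrow> 'a::{finite,ab_group_add}"
  assumes fin: "finite I" and l: "l \<in> I" and unit: "coprime (m l) (add_ord (e l))"
  shows "span I (e(l := lincomb I e m)) = span I e"
proof
  define b where "b = lincomb I e m"
  show "span I (e(l := lincomb I e m)) \<subseteq> span I e"
    by (rule span_subset_span) (auto simp: span_gen[OF fin])
  have "e l \<in> span I (e(l := b))"
  proof -
    obtain t where "[m l * t = 1] (mod add_ord (e l))" using cong_solve_coprime_nat[OF unit] by auto
    then have unit_t: "nsmul (t * m l) (e l) = e l"
      using nsmul_eq_nsmul_iff[of "t * m l" "e l" 1] by (simp add: mult.commute)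
    have "nsmul t b = nsmul (t * m l) (e l) + lincomb I e ((\<lambda>i. t * m i)(l := 0))"
      unfolding b_def lincomb_nsmul lincomb_Diff_singleton[OF fin l, symmetric] by (rule lincomb_remove[OF fin l])
    also have "lincomb I e ((\<lambda>i. t * m i)(l := 0)) = lincomb I (e(l := b)) ((\<lambda>i. t * m i)(l := 0))"
      by (simp add: lincomb_fun_upd[OF fin l])
    finally have "e l = nsmul t b - lincomb I (e(l := b)) ((\<lambda>i. t * m i)(l := 0))"
      using unit_t by simp
    moreover have "nsmul t b \<in> span I (e(l := b))" using span_gen[OF fin l, of "e(l := b)"] by (simp add: span_nsmul)
    ultimately show ?thesis by (simp add: span_diff)
  qed
  then show "span I e \<subseteq> span I (e(l := lincomb I e m))"
    unfolding b_def[symmetric] using span_gen[OF fin, of _ "e(l := b)"]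
    by (intro span_subset_span) (metis fun_upd_other)
qed

section \<open>An invariant complement of a fixed cyclic summand\<close>

definition idempotent_on :: "'a set \<Rightarrow> ('a \<Rightarrow> 'a) \<Rightarrow> bool" where
  "idempotent_on S \<pi> \<longleftrightarrow> (\<forall>x\<in>S. \<pi> x \<in> S \<and> \<pi> (\<pi> x) = \<pi> x)"

lemma ex_coordinate_projection:
  fixes e :: "nat \<Rightarrow> 'a::{finite,ab_group_add}"
  assumes fin: "finite I" and ind: "indep I e" and l: "l \<in> I"
  shows "\<exists>\<phi>. additive_on (span I e) \<phi> \<and> (\<forall>x\<in>range (\<lambda>m. nsmul m (e l)). \<phi> x = x) \<and>
    (\<forall>x\<in>span I e. \<phi> x \<in> range (\<lambda>m. nsmul m (e l)) \<and> x - \<phi> x \<in> span (I - {l}) e) \<and>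
    (\<forall>y\<in>span (I - {l}) e. \<phi> y = 0)"
proof -
  define g where "g i = (if i = l then e l else 0)" for i
  have "lincomb (I - {l}) g c = 0" for c by (rule lincomb_eq_0) (simp add: g_def)
  then have g_lincomb: "lincomb I g c = nsmul (c l) (e l)" for c
    using lincomb_remove[OF fin l, of g c] by (simp add: g_def)
  have "add_ord (g i) dvd add_ord (e i)" for i by (simp add: g_def add_ord_zero_dvd)
  then obtain \<phi> where \<phi>: "additive_on (span I e) \<phi>" and \<phi>_lincomb: "\<And>c. \<phi> (lincomb I e c) = nsmul (c l) (e l)"
    using ex_additive_on_span[OF ind, of g] by (auto simp: g_lincomb)
  have "\<phi> (nsmul m (e l)) = nsmul m (e l)" for m
    using \<phi>_lincomb[of "\<lambda>i. if i = l then m else 0"] by (simp add: lincomb_delta[OF fin l])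
  then have "\<forall>x\<in>range (\<lambda>m. nsmul m (e l)). \<phi> x = x" by auto
  moreover have "\<phi> x \<in> range (\<lambda>m. nsmul m (e l)) \<and> x - \<phi> x \<in> span (I - {l}) e" if x: "x \<in> span I e" for x
  proof -
    obtain c where "x = lincomb I e c" using x unfolding span_def by blast
    then have "\<phi> x = nsmul (c l) (e l)" by (simp add: \<phi>_lincomb)
    moreover have "x = nsmul (c l) (e l) + lincomb (I - {l}) e c"
      using \<open>x = lincomb I e c\<close> by (simp add: lincomb_remove[OF fin l])
    ultimately have "\<phi> x = nsmul (c l) (e l)" and "x - \<phi> x = lincomb (I - {l}) e c" by simp_all
    then show ?thesis by simp
  qed
  moreover have "\<phi> y = 0" if y: "y \<in> span (I - {l}) e" for y
  proof -
    obtain c where "y = lincomb (I - {l}) e c" using y unfolding span_def by blast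
    then show ?thesis by (simp add: lincomb_Diff_singleton[OF fin l] \<phi>_lincomb)
  qed
  ultimately show ?thesis using \<phi> by blast
qed

lemma invariant_projection:
  fixes \<phi> \<pi> :: "'a::{finite,ab_group_add} \<Rightarrow> 'a"
  assumes \<phi>: "additive_on (span I e) \<phi>" and B_S: "B \<subseteq> span I e"
    and \<phi>_B: "\<forall>x\<in>B. \<phi> x = x" and \<phi>_S: "\<forall>x\<in>span I e. \<phi> x \<in> B"
    and \<pi>: "additive_endo \<pi>" and idem: "idempotent_on (span I e) \<pi>" and \<pi>_B: "\<forall>x\<in>B. \<pi> x = x"
  defines "\<psi> \<equiv> \<lambda>x. x - \<phi> (\<pi> x)"
  shows "additive_on (span I e) \<psi>" and "\<forall>x\<in>B. \<psi> x = 0"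
    and "\<forall>x\<in>span I e. \<psi> x \<in> span I e \<and> x - \<psi> x \<in> B \<and> \<psi> (\<psi> x) = \<psi> x \<and> \<psi> (\<pi> (\<psi> x)) = \<pi> (\<psi> x)"
proof -
  have \<psi>_eq: "\<psi> x = x - \<phi> (\<pi> x)" for x by (simp add: \<psi>_def)
  have \<pi>_S: "\<pi> x \<in> span I e" and \<pi>\<pi>: "\<pi> (\<pi> x) = \<pi> x" if "x \<in> span I e" for x
    using idem that unfolding idempotent_on_def by blast+
  have \<phi>\<pi>_B: "\<phi> (\<pi> x) \<in> B" if "x \<in> span I e" for x using \<phi>_S \<pi>_S that by blast
  have \<psi>_S: "\<psi> x \<in> span I e" if "x \<in> span I e" for x
    unfolding \<psi>_def using that \<phi>\<pi>_B B_S by (auto intro: span_diff)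
  show "additive_on (span I e) \<psi>"
    using \<phi> \<pi>_S unfolding additive_on_def \<psi>_def by (simp add: additive_endo_add[OF \<pi>])
  show "\<forall>x\<in>B. \<psi> x = 0" unfolding \<psi>_def using \<pi>_B \<phi>_B by simp
  have \<phi>\<pi>\<psi>: "\<phi> (\<pi> (\<psi> x)) = 0" if x: "x \<in> span I e" for x
  proof -
    have "\<pi> (\<psi> x) = \<pi> x - \<phi> (\<pi> x)"
      unfolding \<psi>_def using \<phi>\<pi>_B[OF x] \<pi>_B by (simp add: additive_endo_diff[OF \<pi>])
    moreover have "\<phi> (\<pi> x - \<phi> (\<pi> x) + \<phi> (\<pi> x)) = \<phi> (\<pi> x - \<phi> (\<pi> x)) + \<phi> (\<phi> (\<pi> x))"
      using \<phi> \<pi>_S[OF x] \<phi>\<pi>_B[OF x] B_S unfolding additive_on_def by (blast intro: span_diff)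
    ultimately show ?thesis using \<phi>_B \<phi>\<pi>_B[OF x] by simp
  qed
  show "\<forall>x\<in>span I e. \<psi> x \<in> span I e \<and> x - \<psi> x \<in> B \<and> \<psi> (\<psi> x) = \<psi> x \<and> \<psi> (\<pi> (\<psi> x)) = \<pi> (\<psi> x)"
  proof
    fix x assume x: "x \<in> span I e"
    have "x - \<psi> x \<in> B" using \<phi>\<pi>_B[OF x] by (simp add: \<psi>_def)
    moreover have "\<psi> (\<psi> x) = \<psi> x" using \<phi>\<pi>\<psi>[OF x] by (simp only: \<psi>_eq[of "\<psi> x"] diff_zero)
    moreover have "\<psi> (\<pi> (\<psi> x)) = \<pi> (\<psi> x)"
      using \<phi>\<pi>\<psi>[OF x] \<pi>\<pi>[OF \<psi>_S[OF x]] by (simp only: \<psi>_eq[of "\<pi> (\<psi> x)"] diff_zero)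
    ultimately show "\<psi> x \<in> span I e \<and> x - \<psi> x \<in> B \<and> \<psi> (\<psi> x) = \<psi> x \<and> \<psi> (\<pi> (\<psi> x)) = \<pi> (\<psi> x)"
      using \<psi>_S[OF x] by blast
  qed
qed

lemma ex_invariant_projection:
  fixes e :: "nat \<Rightarrow> 'a::{finite,ab_group_add}"
  assumes fin: "finite I" and ind: "indep I e" and l: "l \<in> I"
    and \<pi>: "additive_endo \<pi>" and idem: "idempotent_on (span I e) \<pi>" and fixed: "\<pi> (e l) = e l"
  defines "S \<equiv> span I e" and "B \<equiv> range (\<lambda>m. nsmul m (e l))" and "C \<equiv> span (I - {l}) e"
  shows "\<exists>\<psi>. additive_on S \<psi> \<and> (\<forall>x\<in>B. \<psi> x = 0) \<and> (\<forall>y\<in>C. \<psi> y = 0 \<longrightarrow> y = 0) \<and> \<psi> ` C = \<psi> ` S \<and>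
    (\<forall>x\<in>S. \<psi> x \<in> S \<and> x - \<psi> x \<in> B \<and> \<psi> (\<psi> x) = \<psi> x \<and> \<psi> (\<pi> (\<psi> x)) = \<pi> (\<psi> x))"
proof -
  obtain \<phi> where \<phi>: "additive_on S \<phi>" and \<phi>_B: "\<forall>x\<in>B. \<phi> x = x"
    and \<phi>_S: "\<And>x. x \<in> S \<Longrightarrow> \<phi> x \<in> B \<and> x - \<phi> x \<in> C" and \<phi>_C: "\<And>y. y \<in> C \<Longrightarrow> \<phi> y = 0"
    using ex_coordinate_projection[OF fin ind l] unfolding S_def B_def C_def by blast
  have B_S: "B \<subseteq> S" unfolding B_def S_def using span_gen[OF fin l] span_nsmul by blast
  have C_S: "C \<subseteq> S" unfolding C_def S_def by (rule span_subset_span) (simp add: span_gen[OF fin])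
  have "\<forall>x\<in>B. \<pi> x = x" using fixed unfolding B_def by (auto simp: additive_endo_nsmul[OF \<pi>])
  note projection = invariant_projection[OF \<phi>[unfolded S_def] B_S[unfolded S_def] \<phi>_B _ \<pi> idem this]
  define \<psi> where "\<psi> x = x - \<phi> (\<pi> x)" for x
  have \<psi>_add: "additive_on S \<psi>" and \<psi>_B: "\<forall>x\<in>B. \<psi> x = 0"
    and \<psi>_S: "\<forall>x\<in>S. \<psi> x \<in> S \<and> x - \<psi> x \<in> B \<and> \<psi> (\<psi> x) = \<psi> x \<and> \<psi> (\<pi> (\<psi> x)) = \<pi> (\<psi> x)"
    using projection \<phi>_S unfolding \<psi>_def[abs_def] S_def by auto
  have \<psi>_C: "y = 0" if "y \<in> C" and "\<psi> y = 0" for y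
  proof -
    have "y = \<phi> (\<pi> y)" using that(2) by (simp add: \<psi>_def)
    moreover have "\<phi> (\<pi> y) \<in> B" using \<phi>_S idem C_S that(1) unfolding idempotent_on_def S_def by blast
    ultimately have "\<phi> y = y" using \<phi>_B by simp
    then show ?thesis using \<phi>_C[OF that(1)] by simp
  qed
  have "\<psi> ` S \<subseteq> \<psi> ` C"
  proof
    fix z assume "z \<in> \<psi> ` S"
    then obtain x where x: "x \<in> S" and z: "z = \<psi> x" by blast
    have "\<psi> (\<phi> x + (x - \<phi> x)) = \<psi> (\<phi> x) + \<psi> (x - \<phi> x)"
      using \<psi>_add \<phi>_S[OF x] B_S C_S unfolding additive_on_def by blast
    then have "z = \<psi> (x - \<phi> x)" using z \<psi>_B \<phi>_S[OF x] by simp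
    then show "z \<in> \<psi> ` C" using \<phi>_S[OF x] by blast
  qed
  then have "\<psi> ` C = \<psi> ` S" using C_S by blast
  then show ?thesis using \<psi>_add \<psi>_B \<psi>_C \<psi>_S by blast
qed

lemma projection_direct_sum:
  fixes \<psi> :: "'a::{finite,ab_group_add} \<Rightarrow> 'a"
  assumes \<psi>: "additive_on (span I e) \<psi>" and B: "B \<subseteq> span I e" and \<psi>_B: "\<forall>x\<in>B. \<psi> x = 0"
    and \<psi>_S: "\<forall>x\<in>span I e. \<psi> x \<in> span I e \<and> x - \<psi> x \<in> B \<and> \<psi> (\<psi> x) = \<psi> x"
  shows "span I e = {x + y | x y. x \<in> B \<and> y \<in> \<psi> ` span I e}"
    and "x \<in> B \<Longrightarrow> y \<in> \<psi> ` span I e \<Longrightarrow> x + y = 0 \<Longrightarrow> x = 0"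
proof -
  show "span I e = {x + y | x y. x \<in> B \<and> y \<in> \<psi> ` span I e}"
  proof (intro equalityI subsetI)
    fix z assume "z \<in> span I e"
    then have "z = (z - \<psi> z) + \<psi> z" and "z - \<psi> z \<in> B" using \<psi>_S by simp_all
    then show "z \<in> {x + y | x y. x \<in> B \<and> y \<in> \<psi> ` span I e}" using \<open>z \<in> span I e\<close> by blast
  next
    fix z assume "z \<in> {x + y | x y. x \<in> B \<and> y \<in> \<psi> ` span I e}"
    then obtain x y where "z = x + y" and "x \<in> span I e" and "y \<in> span I e" using B \<psi>_S by blast
    then show "z \<in> span I e" by (simp add: span_add)
  qed
  assume x: "x \<in> B" and y: "y \<in> \<psi> ` span I e" and sum: "x + y = 0"
  obtain z where z: "z \<in> span I e" and y_z: "y = \<psi> z" using y by blast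
  have "x \<in> span I e" and "y \<in> span I e" using x B \<psi>_S z y_z by auto
  then have "\<psi> (x + y) = \<psi> x + \<psi> y" using \<psi> by (simp add: additive_on_def)
  then have "y = 0" using x sum \<psi>_B \<psi>_S z y_z additive_on_span_zero[OF \<psi>] by simp
  then show "x = 0" using sum by simp
qed

lemma ex_invariant_complement:
  fixes e :: "nat \<Rightarrow> 'a::{finite,ab_group_add}"
  assumes fin: "finite I" and ind: "indep I e" and l: "l \<in> I"
    and \<pi>: "additive_endo \<pi>" and idem: "idempotent_on (span I e) \<pi>" and fixed: "\<pi> (e l) = e l"
  shows "\<exists>g. indep (I - {l}) g \<and> (\<forall>i\<in>I - {l}. add_ord (g i) = add_ord (e i)) \<and>
    idempotent_on (span (I - {l}) g) \<pi> \<and>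
    span I e = {x + y | x y. x \<in> range (\<lambda>m. nsmul m (e l)) \<and> y \<in> span (I - {l}) g} \<and>
    (\<forall>x y. x \<in> range (\<lambda>m. nsmul m (e l)) \<longrightarrow> y \<in> span (I - {l}) g \<longrightarrow> x + y = 0 \<longrightarrow> x = 0)"
proof -
  define S B C where "S = span I e" and "B = range (\<lambda>m. nsmul m (e l))" and "C = span (I - {l}) e"
  have "\<exists>\<psi>. additive_on S \<psi> \<and> (\<forall>x\<in>B. \<psi> x = 0) \<and> (\<forall>y\<in>C. \<psi> y = 0 \<longrightarrow> y = 0) \<and> \<psi> ` C = \<psi> ` S \<and>
    (\<forall>x\<in>S. \<psi> x \<in> S \<and> x - \<psi> x \<in> B \<and> \<psi> (\<psi> x) = \<psi> x \<and> \<psi> (\<pi> (\<psi> x)) = \<pi> (\<psi> x))"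
    unfolding S_def B_def C_def by (rule ex_invariant_projection[OF fin ind l \<pi> idem fixed])
  then obtain \<psi> where \<psi>: "additive_on S \<psi>" and \<psi>_B: "\<forall>x\<in>B. \<psi> x = 0"
    and \<psi>_inj: "\<forall>y\<in>C. \<psi> y = 0 \<longrightarrow> y = 0" and \<psi>_C: "\<psi> ` C = \<psi> ` S"
    and \<psi>_S: "\<forall>x\<in>S. \<psi> x \<in> S \<and> x - \<psi> x \<in> B \<and> \<psi> (\<psi> x) = \<psi> x \<and> \<psi> (\<pi> (\<psi> x)) = \<pi> (\<psi> x)"
    by (elim exE conjE)
  have B_S: "B \<subseteq> S" unfolding B_def S_def using span_gen[OF fin l] span_nsmul by blast
  have C_S: "C \<subseteq> S" unfolding C_def S_def by (rule span_subset_span) (simp add: span_gen[OF fin])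
  have fin': "finite (I - {l})" using fin by simp
  have ind': "indep (I - {l}) e" using indep_subset[OF fin ind] by blast
  have idem_S: "\<pi> x \<in> S \<and> \<pi> (\<pi> x) = \<pi> x" if "x \<in> S" for x
    using idem that unfolding idempotent_on_def S_def by blast
  have "additive_on (span (I - {l}) e) \<psi>" using additive_on_subset[OF \<psi> C_S] by (simp add: C_def)
  moreover have "\<And>y. y \<in> span (I - {l}) e \<Longrightarrow> \<psi> y = 0 \<Longrightarrow> y = 0" using \<psi>_inj by (simp add: C_def)
  ultimately have \<psi>_image: "indep (I - {l}) (\<lambda>i. \<psi> (e i))"
    "\<forall>i\<in>I - {l}. add_ord (\<psi> (e i)) = add_ord (e i)"
    "span (I - {l}) (\<lambda>i. \<psi> (e i)) = \<psi> ` span (I - {l}) e"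
    using indep_image[OF fin' ind'] by blast+
  have K: "span (I - {l}) (\<lambda>i. \<psi> (e i)) = \<psi> ` S"
    using \<psi>_image(3) \<psi>_C by (simp add: C_def)
  have "idempotent_on (\<psi> ` S) \<pi>"
    unfolding idempotent_on_def
  proof
    fix y assume "y \<in> \<psi> ` S"
    then obtain x where x: "x \<in> S" and y: "y = \<psi> x" by blast
    then have "\<pi> y \<in> S" and "\<pi> (\<pi> y) = \<pi> y" using \<psi>_S idem_S by simp_all
    moreover have "\<psi> (\<pi> y) = \<pi> y" using \<psi>_S x y by blast
    ultimately show "\<pi> y \<in> \<psi> ` S \<and> \<pi> (\<pi> y) = \<pi> y" using rev_image_eqI[of "\<pi> y" S "\<pi> y" \<psi>] by simp
  qed
  have "\<forall>x\<in>span I e. \<psi> x \<in> span I e \<and> x - \<psi> x \<in> B \<and> \<psi> (\<psi> x) = \<psi> x"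
    using \<psi>_S by (simp add: S_def)
  note direct_sum = projection_direct_sum[OF \<psi>[unfolded S_def] B_S[unfolded S_def] \<psi>_B this]
  show ?thesis
  proof (intro exI[of _ "\<lambda>i. \<psi> (e i)"] conjI allI impI)
    show "indep (I - {l}) (\<lambda>i. \<psi> (e i))" and "\<forall>i\<in>I - {l}. add_ord (\<psi> (e i)) = add_ord (e i)"
      by (fact \<psi>_image(1,2))+
    show "idempotent_on (span (I - {l}) (\<lambda>i. \<psi> (e i))) \<pi>" using \<open>idempotent_on (\<psi> ` S) \<pi>\<close> K by simp
    show "span I e = {x + y | x y. x \<in> range (\<lambda>m. nsmul m (e l)) \<and> y \<in> span (I - {l}) (\<lambda>i. \<psi> (e i))}"
      using direct_sum(1) K by (simp add: S_def B_def)
    fix x y assume "x \<in> range (\<lambda>m. nsmul m (e l))" and "y \<in> span (I - {l}) (\<lambda>i. \<psi> (e i))" and "x + y = 0"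
    then show "x = 0" using direct_sum(2) K by (simp add: S_def B_def)
  qed
qed

section \<open>Bases adapted to idempotents\<close>

definition same_type_basis :: "nat set \<Rightarrow> (nat \<Rightarrow> 'a::{finite,ab_group_add}) \<Rightarrow> (nat \<Rightarrow> 'a) \<Rightarrow> bool" where
  "same_type_basis I e f \<longleftrightarrow>
     indep I f \<and> span I f = span I e \<and> (\<forall>i\<in>I. add_ord (f i) = add_ord (e i))"

definition adapted :: "('a \<Rightarrow> 'a) \<Rightarrow> nat set \<Rightarrow> (nat \<Rightarrow> 'a::zero) \<Rightarrow> bool" where
  "adapted \<pi> I f \<longleftrightarrow> (\<forall>i\<in>I. \<pi> (f i) = f i \<or> \<pi> (f i) = 0)"

lemma ex_adapted_basis_step:
  fixes e :: "nat \<Rightarrow> 'a::{finite,ab_group_add}"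
  assumes fin: "finite I" and ind: "indep I e" and l: "l \<in> I"
    and \<pi>: "additive_endo \<pi>" and idem: "idempotent_on (span I e) \<pi>" and fixed: "\<pi> (e l) = e l"
    and IH: "\<And>g. indep (I - {l}) g \<Longrightarrow> \<forall>i\<in>I - {l}. add_ord (g i) = add_ord (e i) \<Longrightarrow>
      idempotent_on (span (I - {l}) g) \<pi> \<Longrightarrow> \<exists>f. same_type_basis (I - {l}) g f \<and> adapted \<pi> (I - {l}) f"
  shows "\<exists>f. same_type_basis I e f \<and> adapted \<pi> I f"
proof -
  obtain g where "indep (I - {l}) g" and ord_g: "\<forall>i\<in>I - {l}. add_ord (g i) = add_ord (e i)"
    and "idempotent_on (span (I - {l}) g) \<pi>"
    and span_e: "span I e = {x + y | x y. x \<in> range (\<lambda>m. nsmul m (e l)) \<and> y \<in> span (I - {l}) g}"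
    and direct: "\<forall>x y. x \<in> range (\<lambda>m. nsmul m (e l)) \<longrightarrow> y \<in> span (I - {l}) g \<longrightarrow> x + y = 0 \<longrightarrow> x = 0"
    using ex_invariant_complement[OF fin ind l \<pi> idem fixed] by blast
  then obtain f' where f': "same_type_basis (I - {l}) g f'" and adapted_f': "adapted \<pi> (I - {l}) f'"
    using IH by blast
  define f where "f i = (if i \<in> {l} then e l else f' i)" for i
  have I: "I = {l} \<union> (I - {l})" using l by blast
  have fin': "finite (I - {l})" and disj: "{l} \<inter> (I - {l}) = {}" using fin by auto
  have "span I f = span I e"
    using span_union[of "{l}" "I - {l}" "\<lambda>_. e l" f', OF _ fin' disj] f' span_e I
    unfolding f_def same_type_basis_def by (simp add: span_singleton)
  moreover have "indep I f"
    using indep_union[of "{l}" "I - {l}" "\<lambda>_. e l" f', OF _ fin' disj indep_singleton] f' direct I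
    unfolding f_def same_type_basis_def by (simp add: span_singleton)
  moreover have "\<forall>i\<in>I. add_ord (f i) = add_ord (e i)"
    using f' ord_g unfolding f_def same_type_basis_def by auto
  moreover have "adapted \<pi> I f"
    using adapted_f' fixed unfolding f_def adapted_def by auto
  ultimately show ?thesis unfolding same_type_basis_def by blast
qed

lemma additive_endo_complement: "additive_endo \<pi> \<Longrightarrow> additive_endo (\<lambda>x. x - \<pi> x)"
  by (simp add: additive_endo_def algebra_simps)

lemma idempotent_on_complement:
  fixes \<pi> :: "'a::{finite,ab_group_add} \<Rightarrow> 'a"
  assumes "additive_endo \<pi>" and "idempotent_on (span I e) \<pi>"
  shows "idempotent_on (span I e) (\<lambda>x. x - \<pi> x)"
  using assms by (simp add: idempotent_on_def additive_endo_diff span_diff)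

lemma adapted_complement:
  fixes \<pi> :: "'a::ab_group_add \<Rightarrow> 'a"
  shows "adapted (\<lambda>x. x - \<pi> x) I f \<Longrightarrow> adapted \<pi> I f"
  unfolding adapted_def
proof
  fix i assume "\<forall>i\<in>I. f i - \<pi> (f i) = f i \<or> f i - \<pi> (f i) = 0" and "i \<in> I"
  then consider "f i - \<pi> (f i) = f i" | "f i - \<pi> (f i) = 0" by blast
  then show "\<pi> (f i) = f i \<or> \<pi> (f i) = 0"
  proof cases
    case 1
    then show ?thesis by (simp add: diff_eq_eq)
  qed simp
qed

lemma ex_adapted_basis_max_order:
  fixes e :: "nat \<Rightarrow> 'a::{finite,ab_group_add}"
  assumes fin: "finite I" and ind: "indep I e" and pp: "\<forall>i\<in>I. prime_power_order (e i)"
    and j: "j \<in> I" and max: "\<forall>i\<in>I. add_ord (e i) \<le> p ^ k" and p: "prime p" and k: "1 \<le> k"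
    and \<rho>: "additive_endo \<rho>" and idem: "idempotent_on (span I e) \<rho>" and ord_b: "add_ord (\<rho> (e j)) = p ^ k"
    and IH: "\<And>l g. l \<in> I \<Longrightarrow> indep (I - {l}) g \<Longrightarrow> \<forall>i\<in>I - {l}. prime_power_order (g i) \<Longrightarrow>
      idempotent_on (span (I - {l}) g) \<rho> \<Longrightarrow> \<exists>f. same_type_basis (I - {l}) g f \<and> adapted \<rho> (I - {l}) f"
  shows "\<exists>f. same_type_basis I e f \<and> adapted \<rho> I f"
proof -
  have "\<rho> (e j) \<in> span I e" and fixed: "\<rho> (\<rho> (e j)) = \<rho> (e j)"
    using idem span_gen[OF fin j] unfolding idempotent_on_def by blast+
  then obtain m where b: "\<rho> (e j) = lincomb I e m" unfolding span_def by blast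
  obtain l where l: "l \<in> I" and ord_l: "add_ord (e l) = p ^ k" and unit: "coprime (m l) (p ^ k)"
    using ex_unit_coordinate[OF ind pp max p k] ord_b b by auto
  define e' where "e' = e(l := \<rho> (e j))"
  have "coprime (m l) (add_ord (e l))" and "add_ord (lincomb I e m) dvd add_ord (e l)"
    using unit ord_l ord_b b by simp_all
  then have ind': "indep I e'" and span': "span I e' = span I e"
    unfolding e'_def b by (simp_all add: exchange_indep[OF fin ind l] exchange_span[OF fin l])
  have ord': "\<forall>i\<in>I. add_ord (e' i) = add_ord (e i)" using ord_b ord_l by (simp add: e'_def)
  have "\<exists>f. same_type_basis I e' f \<and> adapted \<rho> I f"
  proof (rule ex_adapted_basis_step[OF fin ind' l \<rho>])
    show "idempotent_on (span I e') \<rho>" using idem span' by simp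
    show "\<rho> (e' l) = e' l" using fixed by (simp add: e'_def)
    fix g assume "indep (I - {l}) g" and ord_g: "\<forall>i\<in>I - {l}. add_ord (g i) = add_ord (e' i)"
      and "idempotent_on (span (I - {l}) g) \<rho>"
    moreover have "\<forall>i\<in>I - {l}. prime_power_order (g i)"
      using pp ord' ord_g unfolding prime_power_order_def by auto
    ultimately show "\<exists>f. same_type_basis (I - {l}) g f \<and> adapted \<rho> (I - {l}) f" using IH[OF l] by blast
  qed
  then show ?thesis using span' ord' unfolding same_type_basis_def by auto
qed

lemma ex_adapted_basis:
  fixes e :: "nat \<Rightarrow> 'a::{finite,ab_group_add}"
  assumes "finite I" and "indep I e" and "\<forall>i\<in>I. prime_power_order (e i)"
    and "additive_endo \<pi>" and "idempotent_on (span I e) \<pi>"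
  shows "\<exists>f. same_type_basis I e f \<and> adapted \<pi> I f"
  using assms
proof (induction "card I" arbitrary: I e \<pi> rule: less_induct)
  case less
  note fin = less.prems(1) and ind = less.prems(2) and pp = less.prems(3)
  show ?case
  proof (cases "I = {}")
    case True
    then show ?thesis using ind by (auto simp: same_type_basis_def adapted_def)
  next
    case False
    define M where "M = Max ((\<lambda>i. add_ord (e i)) ` I)"
    have "M \<in> (\<lambda>i. add_ord (e i)) ` I" unfolding M_def using fin False by (intro Max_in) auto
    then obtain j where j: "j \<in> I" and "add_ord (e j) = M" by auto
    moreover obtain p k where p: "prime p" and k: "1 \<le> k" and ord_j: "add_ord (e j) = p ^ k"
      using pp j unfolding prime_power_order_def by blast
    ultimately have max: "\<forall>i\<in>I. add_ord (e i) \<le> p ^ k" using fin unfolding M_def by auto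
    have adapted_\<rho>: "\<exists>f. same_type_basis I e f \<and> adapted \<rho> I f"
      if \<rho>: "additive_endo \<rho>" and "idempotent_on (span I e) \<rho>" and "add_ord (\<rho> (e j)) = p ^ k" for \<rho>
    proof (rule ex_adapted_basis_max_order[OF fin ind pp j max p k that])
      fix l g assume "l \<in> I" and "indep (I - {l}) g" and "\<forall>i\<in>I - {l}. prime_power_order (g i)"
        and "idempotent_on (span (I - {l}) g) \<rho>"
      then show "\<exists>f. same_type_basis (I - {l}) g f \<and> adapted \<rho> (I - {l}) f"
        using less.hyps[of "I - {l}" g \<rho>] card_Diff1_less[OF fin] fin \<rho> by simp
    qed
    consider "add_ord (\<pi> (e j)) = p ^ k" | "add_ord (e j - \<pi> (e j)) = p ^ k"
      using add_ord_split[OF less.prems(4) p k ord_j] by blast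
    then show ?thesis
    proof cases
      case 1
      then show ?thesis using adapted_\<rho> less.prems(4,5) by blast
    next
      case 2
      have "\<exists>f. same_type_basis I e f \<and> adapted (\<lambda>x. x - \<pi> x) I f"
        using 2 less.prems(4,5)
        by (intro adapted_\<rho>) (simp_all add: additive_endo_complement idempotent_on_complement)
      then show ?thesis using adapted_complement by blast
    qed
  qed
qed

lemma idempotent_on_UNIV: "idempotent_on UNIV \<pi> \<longleftrightarrow> idempotent_map \<pi>"
  by (simp add: idempotent_on_def idempotent_map_def fun_eq_iff)

lemma span_adapted:
  fixes f :: "nat \<Rightarrow> 'a::{finite,ab_group_add}"
  assumes fin: "finite I" and span: "span I f = UNIV" and \<pi>: "additive_endo \<pi>" and "adapted \<pi> I f"
  defines "I1 \<equiv> {i \<in> I. \<pi> (f i) = f i}" and "I2 \<equiv> {i \<in> I. \<pi> (f i) \<noteq> f i}"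
  shows "span I1 f = {x. \<pi> x = x}" and "span I2 f = {x. \<pi> x = 0}"
proof -
  have \<pi>_I2: "\<pi> (f i) = 0" if "i \<in> I2" for i
    using assms(4) that unfolding adapted_def I2_def by auto
  have \<pi>_span1: "\<pi> x = x" if x: "x \<in> span I1 f" for x
  proof -
    obtain c where "x = lincomb I1 f c" using x unfolding span_def by blast
    moreover have "lincomb I1 (\<lambda>i. \<pi> (f i)) c = lincomb I1 f c" by (rule lincomb_cong) (simp add: I1_def)
    ultimately show ?thesis by (simp add: additive_endo_lincomb[OF \<pi>])
  qed
  have \<pi>_span2: "\<pi> x = 0" if x: "x \<in> span I2 f" for x
  proof -
    obtain c where "x = lincomb I2 f c" using x unfolding span_def by blast
    moreover have "lincomb I2 (\<lambda>i. \<pi> (f i)) c = 0" by (rule lincomb_eq_0) (simp add: \<pi>_I2)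
    ultimately show ?thesis by (simp add: additive_endo_lincomb[OF \<pi>])
  qed
  have decomp: "\<exists>x1\<in>span I1 f. \<exists>x2\<in>span I2 f. x = x1 + x2" for x
  proof -
    have "I = I1 \<union> I2" and "I1 \<inter> I2 = {}" and "finite I1" and "finite I2"
      using fin unfolding I1_def I2_def by auto
    then have "span I f = {x1 + x2 | x1 x2. x1 \<in> span I1 f \<and> x2 \<in> span I2 f}"
      using span_union[of I1 I2 f f] by simp
    then have "x \<in> {x1 + x2 | x1 x2. x1 \<in> span I1 f \<and> x2 \<in> span I2 f}" using span by simp
    then show ?thesis by blast
  qed
  show "span I1 f = {x. \<pi> x = x}"
  proof (intro equalityI subsetI)
    fix x assume "x \<in> {x. \<pi> x = x}"
    moreover obtain x1 x2 where "x1 \<in> span I1 f" "x2 \<in> span I2 f" "x = x1 + x2" using decomp by blast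
    ultimately show "x \<in> span I1 f" using \<pi>_span1 \<pi>_span2 by (simp add: additive_endo_add[OF \<pi>])
  qed (simp add: \<pi>_span1)
  show "span I2 f = {x. \<pi> x = 0}"
  proof (intro equalityI subsetI)
    fix x assume "x \<in> {x. \<pi> x = 0}"
    moreover obtain x1 x2 where "x1 \<in> span I1 f" "x2 \<in> span I2 f" "x = x1 + x2" using decomp by blast
    ultimately show "x \<in> span I2 f" using \<pi>_span1 \<pi>_span2 by (simp add: additive_endo_add[OF \<pi>])
  qed (simp add: \<pi>_span2)
qed

lemma fixed_kernel_basis_union:
  fixes \<epsilon> :: "'a::{finite,ab_group_add} \<Rightarrow> 'a"
  assumes \<epsilon>: "additive_endo \<epsilon>" and idem: "idempotent_map \<epsilon>"
    and fin: "finite I1" "finite I2" and disj: "I1 \<inter> I2 = {}" and "indep I1 g1" and "indep I2 g2"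
    and span1: "span I1 g1 = {x. \<epsilon> x = x}" and span2: "span I2 g2 = {x. \<epsilon> x = 0}"
  shows "indep (I1 \<union> I2) (\<lambda>i. if i \<in> I1 then g1 i else g2 i)"
    and "span (I1 \<union> I2) (\<lambda>i. if i \<in> I1 then g1 i else g2 i) = UNIV"
    and "adapted \<epsilon> (I1 \<union> I2) (\<lambda>i. if i \<in> I1 then g1 i else g2 i)"
proof -
  show "indep (I1 \<union> I2) (\<lambda>i. if i \<in> I1 then g1 i else g2 i)"
  proof (rule indep_union[OF fin disj \<open>indep I1 g1\<close> \<open>indep I2 g2\<close>])
    fix x y assume "x \<in> span I1 g1" and "y \<in> span I2 g2" and "x + y = 0"
    then show "x = 0"
      using span1 span2 additive_endo_add[OF \<epsilon>, of x y] additive_endo_zero[OF \<epsilon>] by simp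
  qed
  have "\<epsilon> (\<epsilon> z) = \<epsilon> z" for z using idem by (metis comp_apply idempotent_map_def)
  then have "\<epsilon> z \<in> span I1 g1" and "z - \<epsilon> z \<in> span I2 g2" for z
    unfolding span1 span2 by (simp_all add: additive_endo_diff[OF \<epsilon>])
  moreover have "z = \<epsilon> z + (z - \<epsilon> z)" for z by simp
  ultimately have "z \<in> {x + y | x y. x \<in> span I1 g1 \<and> y \<in> span I2 g2}" for z by blast
  then show "span (I1 \<union> I2) (\<lambda>i. if i \<in> I1 then g1 i else g2 i) = UNIV"
    unfolding span_union[OF fin disj] by blast
  show "adapted \<epsilon> (I1 \<union> I2) (\<lambda>i. if i \<in> I1 then g1 i else g2 i)"
    using span_gen[OF fin(1), of _ g1] span_gen[OF fin(2), of _ g2] span1 span2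
    unfolding adapted_def by auto
qed

lemma ex_simultaneous_adapted_basis:
  fixes e :: "nat \<Rightarrow> 'a::{finite,ab_group_add}" and \<epsilon>1 \<epsilon>2 :: "'a \<Rightarrow> 'a"
  assumes fin: "finite I" and ind: "indep I e" and span: "span I e = UNIV"
    and pp: "\<forall>i\<in>I. prime_power_order (e i)"
    and \<epsilon>1: "additive_endo \<epsilon>1" and \<epsilon>2: "additive_endo \<epsilon>2"
    and idem1: "idempotent_map \<epsilon>1" and idem2: "idempotent_map \<epsilon>2" and comm: "\<epsilon>1 \<circ> \<epsilon>2 = \<epsilon>2 \<circ> \<epsilon>1"
  obtains g where "indep I g" and "span I g = UNIV" and "\<forall>i\<in>I. add_ord (g i) = add_ord (e i)"
    and "adapted \<epsilon>1 I g" and "adapted \<epsilon>2 I g"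
proof -
  obtain f where f: "same_type_basis I e f" and adapted_f: "adapted \<epsilon>1 I f"
    using ex_adapted_basis[OF fin ind pp \<epsilon>1] idem1 span by (auto simp: idempotent_on_UNIV)
  define I1 I2 where "I1 = {i \<in> I. \<epsilon>1 (f i) = f i}" and "I2 = {i \<in> I. \<epsilon>1 (f i) \<noteq> f i}"
  have I: "I1 \<union> I2 = I" "I1 \<inter> I2 = {}" "finite I1" "finite I2"
    using fin unfolding I1_def I2_def by auto
  have "span I f = UNIV" using f span by (simp add: same_type_basis_def)
  note S = span_adapted[OF fin this \<epsilon>1 adapted_f, folded I1_def I2_def]
  have \<epsilon>2_\<epsilon>1: "\<epsilon>1 (\<epsilon>2 x) = \<epsilon>2 (\<epsilon>1 x)" for x using comm by (metis comp_apply)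
  have \<epsilon>2\<epsilon>2: "\<epsilon>2 (\<epsilon>2 x) = \<epsilon>2 x" for x using idem2 by (metis comp_apply idempotent_map_def)
  have "idempotent_on (span I1 f) \<epsilon>2" and "idempotent_on (span I2 f) \<epsilon>2"
    unfolding S idempotent_on_def by (simp_all add: \<epsilon>2_\<epsilon>1 \<epsilon>2\<epsilon>2 additive_endo_zero[OF \<epsilon>2])
  moreover have "indep I1 f" and "indep I2 f" using f I indep_subset[OF fin]
    unfolding same_type_basis_def by blast+
  moreover have "\<forall>i\<in>I. prime_power_order (f i)"
    using f pp unfolding same_type_basis_def prime_power_order_def by simp
  then have "\<forall>i\<in>I1. prime_power_order (f i)" and "\<forall>i\<in>I2. prime_power_order (f i)"
    using I by auto
  ultimately obtain g1 g2 where g1: "same_type_basis I1 f g1" "adapted \<epsilon>2 I1 g1"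
    and g2: "same_type_basis I2 f g2" "adapted \<epsilon>2 I2 g2"
    using ex_adapted_basis[OF I(3) _ _ \<epsilon>2] ex_adapted_basis[OF I(4) _ _ \<epsilon>2] by meson
  define g where "g i = (if i \<in> I1 then g1 i else g2 i)" for i
  have "span I1 g1 = {x. \<epsilon>1 x = x}" and "span I2 g2 = {x. \<epsilon>1 x = 0}"
    using g1 g2 S unfolding same_type_basis_def by simp_all
  moreover have "indep I1 g1" and "indep I2 g2" using g1 g2 unfolding same_type_basis_def by simp_all
  ultimately have "indep I g" and "span I g = UNIV" and "adapted \<epsilon>1 I g"
    using fixed_kernel_basis_union[OF \<epsilon>1 idem1 I(3,4,2)] unfolding g_def I(1)[symmetric] by blast+
  moreover have "\<forall>i\<in>I. add_ord (g i) = add_ord (e i)"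
    using f g1 g2 I unfolding same_type_basis_def g_def by auto
  moreover have "adapted \<epsilon>2 I g"
    using g1(2) g2(2) I unfolding adapted_def g_def by auto
  ultimately show thesis using that by blast
qed

section \<open>Conjugation to diagonal form\<close>

lemma ppc_basis_prime_power_order: "ppc_basis r e \<Longrightarrow> \<forall>i\<in>{..<r}. prime_power_order (e i)"
  by (simp add: ppc_basis_def prime_power_order_def)

lemma ppc_basis_span:
  assumes "ppc_basis r e"
  shows "span {..<r} e = UNIV"
proof -
  have "x \<in> span {..<r} e" for x
  proof -
    obtain c where "x = (\<Sum>i<r. nsmul (c i) (e i))" using assms unfolding ppc_basis_def by blast
    then have "x = lincomb {..<r} e c" by (simp add: lincomb_def)
    then show ?thesis by simp
  qed
  then show ?thesis by blast
qed

lemma ppc_basis_indep: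
  fixes e :: "nat \<Rightarrow> 'a::{finite,ab_group_add}"
  assumes "ppc_basis r e"
  shows "indep {..<r} e"
  unfolding indep_def
proof (intro allI impI ballI)
  fix c i assume c: "lincomb {..<r} e c = 0" and i: "i \<in> {..<r}"
  define Q where "Q d \<longleftrightarrow> (\<forall>i<r. d i < add_ord (e i)) \<and> (\<forall>i\<ge>r. d i = 0) \<and>
    (0::'a) = (\<Sum>i<r. nsmul (d i) (e i))" for d
  have "\<exists>!d. Q d" using spec[OF conjunct2[OF assms[unfolded ppc_basis_def]], of 0] unfolding Q_def .
  then obtain d where uniq: "\<And>d'. Q d' \<Longrightarrow> d' = d" by (elim ex1E) blast
  have "Q (\<lambda>_. 0)" by (simp add: Q_def add_ord_pos)
  moreover have "Q (\<lambda>j. if j < r then c j mod add_ord (e j) else 0)"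
    using c by (simp add: Q_def add_ord_pos lincomb_def nsmul_mod_add_ord)
  ultimately have "(\<lambda>j. if j < r then c j mod add_ord (e j) else 0) = (\<lambda>_. 0)"
    using uniq by metis
  from fun_cong[OF this, of i] have "c i mod add_ord (e i) = 0" using i by simp
  then show "nsmul (c i) (e i) = 0" by (simp add: nsmul_eq_0_iff dvd_eq_mod_eq_0)
qed

lemma diagonal_endo_commute:
  fixes e :: "nat \<Rightarrow> 'a::{finite,ab_group_add}"
  assumes span: "span {..<r} e = UNIV" and "diagonal_endo r e \<delta>1" and "diagonal_endo r e \<delta>2"
  shows "\<delta>1 \<circ> \<delta>2 = \<delta>2 \<circ> \<delta>1"
proof
  fix x
  have \<delta>1: "additive_endo \<delta>1" and \<delta>2: "additive_endo \<delta>2"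
    and d1: "\<forall>i<r. \<exists>d. \<delta>1 (e i) = nsmul d (e i)" and d2: "\<forall>i<r. \<exists>d. \<delta>2 (e i) = nsmul d (e i)"
    using assms(2,3) unfolding diagonal_endo_def by auto
  have "\<delta>1 (\<delta>2 (e i)) = \<delta>2 (\<delta>1 (e i))" if "i < r" for i
  proof -
    obtain u v where "\<delta>1 (e i) = nsmul u (e i)" and "\<delta>2 (e i) = nsmul v (e i)" using d1 d2 \<open>i < r\<close> by blast
    then show ?thesis
      by (simp add: additive_endo_nsmul[OF \<delta>1] additive_endo_nsmul[OF \<delta>2] nsmul_mult[symmetric] mult.commute)
  qed
  then have "lincomb {..<r} (\<lambda>i. \<delta>1 (\<delta>2 (e i))) c = lincomb {..<r} (\<lambda>i. \<delta>2 (\<delta>1 (e i))) c" for c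
    by (intro lincomb_cong) simp
  moreover obtain c where "x = lincomb {..<r} e c" using span unfolding span_def by blast
  ultimately show "(\<delta>1 \<circ> \<delta>2) x = (\<delta>2 \<circ> \<delta>1) x"
    by (simp add: additive_endo_lincomb[OF \<delta>1] additive_endo_lincomb[OF \<delta>2])
qed

lemma conj_comp: "bij \<alpha> \<Longrightarrow> (inv \<alpha> \<circ> f \<circ> \<alpha>) \<circ> (inv \<alpha> \<circ> g \<circ> \<alpha>) = inv \<alpha> \<circ> (f \<circ> g) \<circ> \<alpha>"
  by (simp add: fun_eq_iff bij_is_surj surj_f_inv_f)

lemma conj_eq_conj_iff: "bij \<alpha> \<Longrightarrow> inv \<alpha> \<circ> f \<circ> \<alpha> = inv \<alpha> \<circ> g \<circ> \<alpha> \<longleftrightarrow> f = g"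
proof -
  assume "bij \<alpha>"
  then have "\<alpha> \<circ> (inv \<alpha> \<circ> h \<circ> \<alpha>) \<circ> inv \<alpha> = h" for h
    by (simp add: fun_eq_iff bij_is_surj surj_f_inv_f)
  then show ?thesis by metis
qed

lemma idempotent_map_conj_iff: "bij \<alpha> \<Longrightarrow> idempotent_map (inv \<alpha> \<circ> f \<circ> \<alpha>) \<longleftrightarrow> idempotent_map f"
  by (simp add: idempotent_map_def conj_comp conj_eq_conj_iff)

lemma conj_commute_iff:
  "bij \<alpha> \<Longrightarrow> (inv \<alpha> \<circ> f \<circ> \<alpha>) \<circ> (inv \<alpha> \<circ> g \<circ> \<alpha>) = (inv \<alpha> \<circ> g \<circ> \<alpha>) \<circ> (inv \<alpha> \<circ> f \<circ> \<alpha>) \<longleftrightarrow> f \<circ> g = g \<circ> f"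
  by (simp add: conj_comp conj_eq_conj_iff)

lemma diagonal_endo_conj:
  fixes e :: "nat \<Rightarrow> 'a::{finite,ab_group_add}"
  assumes \<alpha>: "additive_auto \<alpha>" and \<alpha>_e: "\<forall>i<r. \<alpha> (e i) = g i"
    and \<epsilon>: "additive_endo \<epsilon>" and "adapted \<epsilon> {..<r} g"
  shows "diagonal_endo r e (inv \<alpha> \<circ> \<epsilon> \<circ> \<alpha>)"
  unfolding diagonal_endo_def
proof (intro conjI allI impI)
  have "additive_endo \<alpha>" and "inj \<alpha>" using \<alpha> by (simp_all add: additive_auto_def bij_is_inj)
  then show "additive_endo (inv \<alpha> \<circ> \<epsilon> \<circ> \<alpha>)" by (intro additive_endo_comp additive_endo_inv \<alpha> \<epsilon>)
  fix i assume "i < r"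
  then have conj_e: "(inv \<alpha> \<circ> \<epsilon> \<circ> \<alpha>) (e i) = inv \<alpha> (\<epsilon> (g i))" and inv_g: "inv \<alpha> (g i) = e i"
    using \<alpha>_e \<open>inj \<alpha>\<close> by (simp_all add: inv_f_eq)
  have "\<epsilon> (g i) = g i \<or> \<epsilon> (g i) = 0" using assms(4) \<open>i < r\<close> by (simp add: adapted_def)
  then have "(inv \<alpha> \<circ> \<epsilon> \<circ> \<alpha>) (e i) = nsmul 1 (e i) \<or> (inv \<alpha> \<circ> \<epsilon> \<circ> \<alpha>) (e i) = nsmul 0 (e i)"
    unfolding conj_e using inv_g additive_endo_zero[OF additive_endo_inv[OF \<alpha>]] by auto
  then show "\<exists>d. (inv \<alpha> \<circ> \<epsilon> \<circ> \<alpha>) (e i) = nsmul d (e i)" by blast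
qed

theorem theorem5p9:
  fixes e :: "nat \<Rightarrow> 'a::{finite, ab_group_add}" and r :: nat
    and \<epsilon>1 \<epsilon>2 :: "'a \<Rightarrow> 'a"
  assumes "ppc_basis r e" and "additive_endo \<epsilon>1" and "additive_endo \<epsilon>2"
  shows "(idempotent_map \<epsilon>1 \<and> idempotent_map \<epsilon>2 \<and> \<epsilon>1 \<circ> \<epsilon>2 = \<epsilon>2 \<circ> \<epsilon>1) \<longleftrightarrow>
    (\<exists>\<delta>1 \<delta>2 \<alpha>. diagonal_endo r e \<delta>1 \<and> diagonal_endo r e \<delta>2 \<and>
        idempotent_map \<delta>1 \<and> idempotent_map \<delta>2 \<and> additive_auto \<alpha> \<and>
        inv \<alpha> \<circ> \<epsilon>1 \<circ> \<alpha> = \<delta>1 \<and> inv \<alpha> \<circ> \<epsilon>2 \<circ> \<alpha> = \<delta>2)"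
    (is "?idem_comm \<longleftrightarrow> ?diagonalisable")
proof
  have fin: "finite {..<r}" by simp
  note basis = ppc_basis_indep[OF assms(1)] ppc_basis_span[OF assms(1)] ppc_basis_prime_power_order[OF assms(1)]
  assume ?idem_comm
  then have "idempotent_map \<epsilon>1" and "idempotent_map \<epsilon>2" and "\<epsilon>1 \<circ> \<epsilon>2 = \<epsilon>2 \<circ> \<epsilon>1" by simp_all
  then obtain g where g: "indep {..<r} g" "span {..<r} g = UNIV" "\<forall>i\<in>{..<r}. add_ord (g i) = add_ord (e i)"
    and adapted: "adapted \<epsilon>1 {..<r} g" "adapted \<epsilon>2 {..<r} g"
    by (rule ex_simultaneous_adapted_basis[OF fin basis assms(2,3)])
  obtain \<alpha> where \<alpha>: "additive_auto \<alpha>" and \<alpha>_e: "\<forall>i\<in>{..<r}. \<alpha> (e i) = g i"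
    using ex_additive_auto_basis[OF fin basis(1,2) g(1)] g(3) by blast
  then have "diagonal_endo r e (inv \<alpha> \<circ> \<epsilon>1 \<circ> \<alpha>)" and "diagonal_endo r e (inv \<alpha> \<circ> \<epsilon>2 \<circ> \<alpha>)"
    using diagonal_endo_conj[OF \<alpha> _ assms(2) adapted(1)] diagonal_endo_conj[OF \<alpha> _ assms(3) adapted(2)] by simp_all
  moreover have "bij \<alpha>" using \<alpha> by (simp add: additive_auto_def)
  ultimately show ?diagonalisable
    using \<alpha> \<open>?idem_comm\<close> by (intro exI[of _ "inv \<alpha> \<circ> \<epsilon>1 \<circ> \<alpha>"] exI[of _ "inv \<alpha> \<circ> \<epsilon>2 \<circ> \<alpha>"] exI[of _ \<alpha>])
      (simp add: idempotent_map_conj_iff)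
next
  assume ?diagonalisable
  then obtain \<delta>1 \<delta>2 \<alpha> where \<delta>: "diagonal_endo r e \<delta>1" "diagonal_endo r e \<delta>2"
    "idempotent_map \<delta>1" "idempotent_map \<delta>2" and "additive_auto \<alpha>"
    and conj: "inv \<alpha> \<circ> \<epsilon>1 \<circ> \<alpha> = \<delta>1" "inv \<alpha> \<circ> \<epsilon>2 \<circ> \<alpha> = \<delta>2" by blast
  then have "bij \<alpha>" by (simp add: additive_auto_def)
  moreover have "\<delta>1 \<circ> \<delta>2 = \<delta>2 \<circ> \<delta>1" by (rule diagonal_endo_commute[OF ppc_basis_span[OF assms(1)] \<delta>(1,2)])
  ultimately show ?idem_comm
    using \<delta>(3,4) unfolding conj[symmetric] by (simp add: idempotent_map_conj_iff conj_commute_iff)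
qed

end
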